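(* Every spiking neural network that is a randomized neural timer with time parameter $t\in\mathbb{N}_{>0}$ and error probability $\delta\in(0,1)$ must use $\Omega(\min\{\log\log(1/\delta),\log t\})$ neurons.
   Context: A spiking neural network (SNN) consists of input neurons (no incoming edges), output neurons and auxiliary neurons, connected by directed weighted edges with weights $w(u,v)\in\mathbb{R}$ (self-loops allowed); every neuron $v$ has a threshold $b(v)\ge 0$ and is either excitatory (all outgoing weights $\ge0$) or inhibitory (all outgoing weights $\le 0$). The network evolves in discrete synchronous rounds; $u^\tau\in\{0,1\}$ indicates whether $u$ fires in round $\tau$, input firings are given externally, and for a non-input neuron the potential is $\mathrm{pot}(u,\tau)=\sum_v w(v,u)\,v^{\tau-1}-b(u)$. A deterministic threshold gate fires iff $\mathrm{pot}(u,\tau)\ge0$; a spiking (probabilistic) neuron fires in round $\tau$ independently with probability $1/(1+e^{-\mathrm{pot}(u,\tau)})$; neurons may be of either kind. A randomized neural timer with parameters $t$ and $\delta$ has an input neuron $x$ and an output neuron $y$ and satisfies, within a time window of $\mathrm{poly}(t)$ rounds: (i) for every fixed firing event of $x$ in a round $\tau$, with probability at least $1-\delta$, $y$ fires in each of the following $t$ rounds; (ii) with probability at least $1-\delta$, $y^{\tau'}=0$ for every round $\tau'$ with $\tau'-\mathrm{Last}(\tau')\ge 2t$, where $\mathrm{Last}(\tau')=\max\{i\le\tau' : x^i=1\}$. *)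

theory Defs
  imports "HOL-Probability.Probability"
begin

text \<open>A spiking neural network with neurons labelled by natural numbers.
  inp = the input neuron x, outp = the output neuron y; all other neurons
  are non-input neurons. weight u v = w(u,v); thr v = b(v);
  excit v: v is excitatory (otherwise inhibitory);
  spiking v: v is a spiking (probabilistic) neuron (otherwise a
  deterministic threshold gate).\<close>

record snn =
  neurons :: "nat set"
  inp     :: nat
  outp    :: nat
  weight  :: "nat \<Rightarrow> nat \<Rightarrow> real"
  thr     :: "nat \<Rightarrow> real"
  excit   :: "nat \<Rightarrow> bool"
  spiking :: "nat \<Rightarrow> bool"

definition wf_snn :: "snn \<Rightarrow> bool" where
  "wf_snn N \<longleftrightarrow>
     finite (neurons N) \<and> inp N \<in> neurons N \<and> outp N \<in> neurons N \<and> inp N \<noteq> outp N \<and>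
     (\<forall>v\<in>neurons N. weight N v (inp N) = 0) \<and>
     (\<forall>v\<in>neurons N. thr N v \<ge> 0) \<and>
     (\<forall>u\<in>neurons N. \<forall>v\<in>neurons N.
        (excit N u \<longrightarrow> weight N u v \<ge> 0) \<and> (\<not> excit N u \<longrightarrow> weight N u v \<le> 0))"

definition pot :: "snn \<Rightarrow> (nat \<Rightarrow> bool) \<Rightarrow> nat \<Rightarrow> real" where
  "pot N s u = (\<Sum>v\<in>neurons N. weight N v u * (if s v then 1 else 0)) - thr N u"

definition sigmoid :: "real \<Rightarrow> real" where
  "sigmoid z = 1 / (1 + exp (- z))"

definition neuron_step :: "snn \<Rightarrow> bool \<Rightarrow> (nat \<Rightarrow> bool) \<Rightarrow> nat \<Rightarrow> bool pmf" where
  "neuron_step N b s u =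
     (if u = inp N then return_pmf b
      else if spiking N u then bernoulli_pmf (sigmoid (pot N s u))
      else return_pmf (pot N s u \<ge> 0))"

definition step :: "snn \<Rightarrow> bool \<Rightarrow> (nat \<Rightarrow> bool) \<Rightarrow> (nat \<Rightarrow> bool) pmf" where
  "step N b s = Pi_pmf (neurons N) False (neuron_step N b s)"

definition init_state :: "snn \<Rightarrow> bool \<Rightarrow> (nat \<Rightarrow> bool)" where
  "init_state N b = (\<lambda>u. u = inp N \<and> b)"

text \<open>An execution h maps round \<tau> to the firing
  state in round \<tau>; rounds > n are left at the initial state.\<close>
fun traj :: "snn \<Rightarrow> (nat \<Rightarrow> bool) \<Rightarrow> nat \<Rightarrow> (nat \<Rightarrow> nat \<Rightarrow> bool) pmf" where
  "traj N X 0 = return_pmf (\<lambda>_. init_state N (X 0))"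
| "traj N X (Suc n) =
     bind_pmf (traj N X n) (\<lambda>h. map_pmf (\<lambda>s. h(Suc n := s)) (step N (X (Suc n)) (h n)))"

text \<open>Randomized neural timer with parameters t, \<delta>, required to satisfy
  its guarantees within the time window of rounds 0..T.\<close>
definition is_timer :: "snn \<Rightarrow> nat \<Rightarrow> real \<Rightarrow> nat \<Rightarrow> bool" where
  "is_timer N t \<delta> T \<longleftrightarrow> wf_snn N \<and>
     (\<forall>X \<tau>. X \<tau> \<longrightarrow> \<tau> + t \<le> T \<longrightarrow>
        measure_pmf.prob (traj N X T) {h. \<forall>i\<in>{1..t}. h (\<tau> + i) (outp N)} \<ge> 1 - \<delta>) \<and>
     (\<forall>X. measure_pmf.prob (traj N X T)
        {h. \<forall>\<tau>'\<le>T. \<forall>l\<le>\<tau>'. X l \<and> (\<forall>i. l < i \<and> i \<le> \<tau>' \<longrightarrow> \<not> X i) \<and> 2 * t \<le> \<tau>' - l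
             \<longrightarrow> \<not> h \<tau>' (outp N)} \<ge> 1 - \<delta>)"

end

theory Submission
  imports Defs
begin

text \<open>Feed the timer a single input spike in round 0. From then on the network is a finite
  Markov chain on its 2^n configurations, and its output fires throughout the first t rounds
  with probability at least 1 - \<delta>, but throughout the first 2t rounds with probability at
  most \<delta>. Sampling the run every g = t div 2^n rounds, some configuration repeats, so a union
  bound yields a reachable configuration s and a return cycle at s of length at most t, with
  the output firing all along, whose probability is at least 1/(2(2^n+1)^3). Running around
  this cycle 4 * 2^n times keeps the output firing for at least 2t rounds, hence
  \<delta> \<ge> (2(2^n+1)^3)^-(4 * 2^n + 1), i.e. ln ln (1/\<delta>) = O(n), unless already t < 2^n,
  i.e. ln t = O(n).\<close>

definition configs :: "snn \<Rightarrow> (nat \<Rightarrow> bool) set" where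
  "configs N = {s. \<forall>u. s u \<longrightarrow> u \<in> neurons N}"

lemma configs_eq_image_Pow: "configs N = (\<lambda>A u. u \<in> A) ` Pow (neurons N)"
proof -
  have "s \<in> (\<lambda>A u. u \<in> A) ` Pow (neurons N)" if "\<forall>u. s u \<longrightarrow> u \<in> neurons N" for s
    by (rule image_eqI[of _ _ "{u. s u}"]) (use that in auto)
  then show ?thesis unfolding configs_def by auto
qed

lemma finite_configs: "finite (neurons N) \<Longrightarrow> finite (configs N)"
  unfolding configs_eq_image_Pow by simp

lemma card_configs: "finite (neurons N) \<Longrightarrow> card (configs N) = 2 ^ card (neurons N)"
  unfolding configs_eq_image_Pow
  by (subst card_image) (auto simp: inj_on_def fun_eq_iff card_Pow)

lemma set_pmf_step_subset_configs: "finite (neurons N) \<Longrightarrow> set_pmf (step N b s) \<subseteq> configs N"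
  using set_Pi_pmf_subset[of "neurons N" False "neuron_step N b s"]
  unfolding step_def configs_def by blast

lemma traj_in_configs: "wf_snn N \<Longrightarrow> h \<in> set_pmf (traj N X T) \<Longrightarrow> h i \<in> configs N"
proof (induction T arbitrary: h)
  case 0
  then show ?case by (auto simp: configs_def init_state_def wf_snn_def)
next
  case (Suc T)
  then obtain h' s where "h' \<in> set_pmf (traj N X T)" "s \<in> set_pmf (step N (X (Suc T)) (h' T))"
    and "h = h'(Suc T := s)" by auto
  then show ?case using Suc set_pmf_step_subset_configs[of N] by (auto simp: wf_snn_def)
qed

text \<open>The l-step transition weights of the chain K on S, killed as soon as it enters a state
  violating P.\<close>

fun path_weight :: "('a \<Rightarrow> 'a pmf) \<Rightarrow> 'a set \<Rightarrow> ('a \<Rightarrow> bool) \<Rightarrow> nat \<Rightarrow> 'a \<Rightarrow> 'a \<Rightarrow> real" where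
  "path_weight K S P 0 s u = (if s = u then 1 else 0)"
| "path_weight K S P (Suc l) s u =
     (if P u then \<Sum>w\<in>S. path_weight K S P l s w * pmf (K w) u else 0)"

lemma path_weight_nonneg: "0 \<le> path_weight K S P l s u"
  by (induction l arbitrary: u) (auto intro!: sum_nonneg)

lemma sum_path_weight_Suc_le:
  assumes "finite S"
  shows "(\<Sum>u\<in>S. path_weight K S P (Suc l) s u) \<le> (\<Sum>u\<in>S. path_weight K S P l s u)"
proof -
  have "(\<Sum>u\<in>S. path_weight K S P (Suc l) s u)
      \<le> (\<Sum>u\<in>S. \<Sum>w\<in>S. path_weight K S P l s w * pmf (K w) u)"
    by (intro sum_mono) (auto intro!: sum_nonneg mult_nonneg_nonneg path_weight_nonneg)
  also have "\<dots> = (\<Sum>w\<in>S. path_weight K S P l s w * (\<Sum>u\<in>S. pmf (K w) u))"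
    by (subst sum.swap) (simp add: sum_distrib_left)
  also have "\<dots> \<le> (\<Sum>w\<in>S. path_weight K S P l s w * 1)"
    using assms by (intro sum_mono mult_left_mono path_weight_nonneg)
      (metis measure_measure_pmf_finite measure_pmf.prob_le_1)
  finally show ?thesis by simp
qed

lemma sum_path_weight_antimono:
  assumes "finite S" and "l \<le> l'"
  shows "(\<Sum>u\<in>S. path_weight K S P l' s u) \<le> (\<Sum>u\<in>S. path_weight K S P l s u)"
  using assms(2)
proof (induction l' rule: dec_induct)
  case (step k)
  then show ?case using sum_path_weight_Suc_le[OF assms(1), of K P k s] by linarith
qed simp

lemma path_weight_le_1:
  assumes "finite S" and "s \<in> S" and "u \<in> S"
  shows "path_weight K S P l s u \<le> 1"
proof -
  have "path_weight K S P l s u \<le> (\<Sum>u\<in>S. path_weight K S P l s u)"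
    using assms by (intro member_le_sum path_weight_nonneg)
  also have "\<dots> \<le> (\<Sum>u\<in>S. path_weight K S P 0 s u)"
    using assms(1) by (rule sum_path_weight_antimono) simp
  also have "\<dots> = 1" using assms by simp
  finally show ?thesis .
qed

lemma path_weight_concat:
  assumes "v \<in> S"
  shows "path_weight K S P a s v * path_weight K S P b v u \<le> path_weight K S P (a + b) s u"
proof (induction b arbitrary: u)
  case (Suc b)
  have "path_weight K S P a s v * path_weight K S P (Suc b) v u
      = (if P u then \<Sum>w\<in>S. path_weight K S P a s v * path_weight K S P b v w * pmf (K w) u
         else 0)"
    by (simp add: sum_distrib_left mult.assoc)
  also have "\<dots> \<le> (if P u then \<Sum>w\<in>S. path_weight K S P (a + b) s w * pmf (K w) u else 0)"
    using Suc.IH by (auto intro!: sum_mono mult_right_mono)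
  finally show ?case by simp
qed (simp add: path_weight_nonneg)

lemma path_weight_pump:
  assumes "v \<in> S"
  shows "path_weight K S P a s v * path_weight K S P d v v ^ k \<le> path_weight K S P (a + k * d) s v"
proof (induction k)
  case (Suc k)
  have "path_weight K S P a s v * path_weight K S P d v v ^ Suc k
      = (path_weight K S P a s v * path_weight K S P d v v ^ k) * path_weight K S P d v v"
    by simp
  also have "\<dots> \<le> path_weight K S P (a + k * d) s v * path_weight K S P d v v"
    by (rule mult_right_mono[OF Suc.IH path_weight_nonneg])
  also have "\<dots> \<le> path_weight K S P (a + k * d + d) s v"
    by (rule path_weight_concat[OF assms])
  also have "a + k * d + d = a + Suc k * d" by simp
  finally show ?case .
qed simp

lemma sum_path_weight_ge_cycle_power:
  assumes S: "finite S" "s0 \<in> S" "s \<in> S"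
    and cycle: "\<eta> \<le> path_weight K S P a s0 s * path_weight K S P d s s"
    and "0 \<le> \<eta>" and "l \<le> a + k * d"
  shows "\<eta> ^ (k + 1) \<le> (\<Sum>u\<in>S. path_weight K S P l s0 u)"
proof -
  let ?x = "path_weight K S P a s0 s" and ?z = "path_weight K S P d s s"
  have "?x * ?z \<le> ?x"
    using path_weight_le_1[OF S(1,3,3)] by (intro mult_left_le path_weight_nonneg)
  moreover have "?x * ?z \<le> ?z"
    using path_weight_le_1[OF S(1,2,3)] by (intro mult_left_le_one_le path_weight_nonneg)
  ultimately have "\<eta> ^ (k + 1) \<le> ?x * ?z ^ k"
    using cycle \<open>0 \<le> \<eta>\<close> by (auto intro!: mult_mono power_mono)
  also have "\<dots> \<le> path_weight K S P (a + k * d) s0 s"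
    using S(3) by (rule path_weight_pump)
  also have "\<dots> \<le> (\<Sum>u\<in>S. path_weight K S P (a + k * d) s0 u)"
    using S by (intro member_le_sum path_weight_nonneg)
  also have "\<dots> \<le> (\<Sum>u\<in>S. path_weight K S P l s0 u)"
    using S(1) assms(6) by (rule sum_path_weight_antimono)
  finally show ?thesis .
qed

lemma measure_bind_pmf:
  "measure_pmf.prob (bind_pmf M f) A = measure_pmf.expectation M (\<lambda>x. measure_pmf.prob (f x) A)"
proof -
  have "ennreal (measure_pmf.prob (bind_pmf M f) A) = emeasure (bind_pmf M f) A"
    by (simp add: measure_pmf.emeasure_eq_measure)
  also have "\<dots> = (\<integral>\<^sup>+x. emeasure (f x) A \<partial>M)" by simp
  also have "\<dots> = (\<integral>\<^sup>+x. ennreal (measure_pmf.prob (f x) A) \<partial>M)"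
    by (simp add: measure_pmf.emeasure_eq_measure)
  also have "\<dots> = ennreal (measure_pmf.expectation M (\<lambda>x. measure_pmf.prob (f x) A))"
    by (rule nn_integral_eq_integral)
      (auto intro!: measure_pmf.integrable_const_bound[where B=1])
  finally show ?thesis
    by (subst (asm) ennreal_inj) (auto intro!: integral_nonneg_AE)
qed

lemma expectation_split_by_value:
  assumes "finite S" and "\<And>x. x \<in> set_pmf p \<Longrightarrow> f x \<in> S"
  shows "measure_pmf.expectation p (\<lambda>x. if A x then \<phi> (f x) else 0)
       = (\<Sum>v\<in>S. measure_pmf.prob p {x. A x \<and> f x = v} * (\<phi> v :: real))"
proof -
  have "measure_pmf.expectation p (\<lambda>x. if A x then \<phi> (f x) else 0)
      = measure_pmf.expectation p (\<lambda>x. \<Sum>v\<in>S. indicator {x. A x \<and> f x = v} x * \<phi> v)"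
    using assms by (intro integral_cong_AE)
      (auto simp: AE_measure_pmf_iff indicator_def if_distrib cong: if_cong)
  also have "\<dots> = (\<Sum>v\<in>S. measure_pmf.expectation p (\<lambda>x. indicator {x. A x \<and> f x = v} x * \<phi> v))"
    by (intro Bochner_Integration.integral_sum
        measure_pmf.integrable_const_bound[where B="\<bar>\<phi> _\<bar>"]) (auto simp: indicator_def)
  finally show ?thesis by simp
qed

lemma prob_traj_Suc:
  "measure_pmf.prob (traj N X (Suc T)) E = measure_pmf.expectation (traj N X T)
     (\<lambda>h. measure_pmf.prob (step N (X (Suc T)) (h T)) {s. h(Suc T := s) \<in> E})"
  by (simp add: measure_bind_pmf vimage_def)

lemma prob_traj_extend:
  assumes "l \<le> T" and "\<And>h k s. l < k \<Longrightarrow> h(k := s) \<in> E \<longleftrightarrow> h \<in> E"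
  shows "measure_pmf.prob (traj N X T) E = measure_pmf.prob (traj N X l) E"
  using assms(1)
proof (induction T rule: dec_induct)
  case (step T)
  then have "(\<lambda>h. measure_pmf.prob (step N (X (Suc T)) (h T)) {s. h(Suc T := s) \<in> E}) = indicator E"
    using assms(2) by (auto simp: fun_eq_iff indicator_def)
  then show ?case using step.IH unfolding prob_traj_Suc by simp
qed simp

abbreviation firing_weight :: "snn \<Rightarrow> nat \<Rightarrow> (nat \<Rightarrow> bool) \<Rightarrow> (nat \<Rightarrow> bool) \<Rightarrow> real" where
  "firing_weight N \<equiv> path_weight (step N False) (configs N) (\<lambda>s. s (outp N))"

lemma prob_traj_silent_step:
  assumes wf: "wf_snn N" and silent: "\<not> X (Suc l)" and local: "\<And>h s. Q (h(Suc l := s)) = Q h"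
  shows "measure_pmf.prob (traj N X (Suc l)) {h. Q h \<and> h (Suc l) (outp N) \<and> h (Suc l) = u}
       = (if u (outp N) then \<Sum>v\<in>configs N.
            measure_pmf.prob (traj N X l) {h. Q h \<and> h l = v} * pmf (step N False v) u else 0)"
proof -
  let ?\<phi> = "\<lambda>v. if u (outp N) then pmf (step N False v) u else 0"
  have "{s. h(Suc l := s) \<in> {h. Q h \<and> h (Suc l) (outp N) \<and> h (Suc l) = u}}
      = (if Q h \<and> u (outp N) then {u} else {})" for h
    using local by auto
  then have "measure_pmf.prob (traj N X (Suc l)) {h. Q h \<and> h (Suc l) (outp N) \<and> h (Suc l) = u}
      = measure_pmf.expectation (traj N X l) (\<lambda>h. if Q h then ?\<phi> (h l) else 0)"
    unfolding prob_traj_Suc using silent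
    by (intro Bochner_Integration.integral_cong) (auto simp: measure_pmf_single)
  also have "\<dots> = (\<Sum>v\<in>configs N. measure_pmf.prob (traj N X l) {h. Q h \<and> h l = v} * ?\<phi> v)"
    using wf traj_in_configs[OF wf]
    by (intro expectation_split_by_value) (auto simp: wf_snn_def finite_configs)
  finally show ?thesis by (auto simp: sum_distrib_left)
qed

lemma prob_run_until:
  assumes wf: "wf_snn N" and silent: "\<And>i. 0 < i \<Longrightarrow> \<not> X i"
  shows "measure_pmf.prob (traj N X l) {h. (\<forall>j\<in>{1..l}. h j (outp N)) \<and> h l = u}
       = firing_weight N l (init_state N (X 0)) u"
proof (induction l arbitrary: u)
  case 0
  show ?case by (simp add: indicator_def)
next
  case (Suc l)
  let ?Q = "\<lambda>h. \<forall>j\<in>{1..l}. h j (outp N)"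
  have "{h. (\<forall>j\<in>{1..Suc l}. h j (outp N)) \<and> h (Suc l) = u}
      = {h. ?Q h \<and> h (Suc l) (outp N) \<and> h (Suc l) = u}"
    by (auto simp: atLeastAtMostSuc_conv)
  moreover have "?Q (h(Suc l := s)) = ?Q h" for h s by auto
  ultimately show ?case
    using prob_traj_silent_step[where X=X and l=l and Q="?Q", OF wf silent[OF zero_less_Suc]] Suc.IH
    by simp
qed

lemma prob_run_through:
  assumes wf: "wf_snn N" and silent: "\<And>i. 0 < i \<Longrightarrow> \<not> X i" and "a \<le> l"
  shows "measure_pmf.prob (traj N X l) {h. (\<forall>j\<in>{1..l}. h j (outp N)) \<and> h a = s \<and> h l = u}
       = firing_weight N a (init_state N (X 0)) s * firing_weight N (l - a) s u"
  using assms(3)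
proof (induction l arbitrary: u rule: dec_induct)
  case base
  have "{h. (\<forall>j\<in>{1..a}. h j (outp N)) \<and> h a = s \<and> h a = u}
      = (if s = u then {h. (\<forall>j\<in>{1..a}. h j (outp N)) \<and> h a = u} else {})"
    by auto
  then show ?case using prob_run_until[OF wf silent] by simp
next
  case (step l)
  let ?Q = "\<lambda>h. (\<forall>j\<in>{1..l}. h j (outp N)) \<and> h a = s"
  have "{h. (\<forall>j\<in>{1..Suc l}. h j (outp N)) \<and> h a = s \<and> h (Suc l) = u}
      = {h. ?Q h \<and> h (Suc l) (outp N) \<and> h (Suc l) = u}"
    using step.hyps by (auto simp: atLeastAtMostSuc_conv)
  moreover have "?Q (h(Suc l := s')) = ?Q h" for h s' using step.hyps by auto
  ultimately show ?case
    using prob_traj_silent_step[where X=X and l=l and Q="?Q", OF wf silent[OF zero_less_Suc]]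
      step.IH step.hyps
    by (simp add: Suc_diff_le sum_distrib_left mult.assoc)
qed

lemma prob_run:
  assumes wf: "wf_snn N" and silent: "\<And>i. 0 < i \<Longrightarrow> \<not> X i" and "l \<le> T"
  shows "measure_pmf.prob (traj N X T) {h. \<forall>j\<in>{1..l}. h j (outp N)}
       = (\<Sum>u\<in>configs N. firing_weight N l (init_state N (X 0)) u)"
proof -
  let ?run = "\<lambda>h. \<forall>j\<in>{1..l}. h j (outp N)"
  have "measure_pmf.prob (traj N X T) {h. ?run h} = measure_pmf.prob (traj N X l) {h. ?run h}"
    using assms(3) by (intro prob_traj_extend) auto
  also have "\<dots> = (\<Sum>u\<in>configs N. measure_pmf.prob (traj N X l) {h. ?run h \<and> h l = u})"
  proof -
    have "AE h in traj N X l. (\<forall>u\<in>configs N. ?run h \<and> h l = u \<longrightarrow> ?run h)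
        \<and> (?run h \<longrightarrow> (\<exists>!u\<in>configs N. ?run h \<and> h l = u))"
      using traj_in_configs[OF wf] by (auto simp: AE_measure_pmf_iff)
    moreover have "finite (configs N)" using wf by (simp add: wf_snn_def finite_configs)
    ultimately show ?thesis using measure_pmf.prob_sum[of "configs N" "traj N X l"] by simp
  qed
  finally show ?thesis using prob_run_until[OF wf silent] by simp
qed

lemma pigeonhole_repeat:
  assumes "finite S" and "\<And>i. i \<le> card S \<Longrightarrow> f i \<in> S"
  obtains i i' where "i < i'" and "i' \<le> card S" and "f i = f i'"
proof -
  have "f ` {0..card S} \<subseteq> S" using assms(2) by auto
  with assms(1) have "card (f ` {0..card S}) \<le> card S" by (rule card_mono)
  then have "\<not> inj_on f {0..card S}" by (intro pigeonhole) simp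
  then obtain i i' where "i \<le> card S" "i' \<le> card S" "i \<noteq> i'" "f i = f i'"
    unfolding inj_on_def by auto
  then show ?thesis
    using that[of i i'] that[of i' i] by (cases "i < i'") auto
qed

text \<open>A triple (i, i', s) records that the run sampled every g rounds is in configuration s at
  its i-th and at its i'-th sample.\<close>

definition cycles :: "nat \<Rightarrow> 'a set \<Rightarrow> (nat \<times> nat \<times> 'a) set" where
  "cycles M S = {(i, i', s). i < i' \<and> i' \<le> M \<and> s \<in> S}"

lemma cycles_subset: "cycles M S \<subseteq> {..M} \<times> {..M} \<times> S"
  by (auto simp: cycles_def)

lemma finite_cycles: "finite S \<Longrightarrow> finite (cycles M S)"
  by (rule finite_subset[OF cycles_subset]) simp

lemma card_cycles_le:
  assumes "finite S" and "card S \<le> M"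
  shows "card (cycles M S) \<le> (M + 1) ^ 3"
proof -
  have "card (cycles M S) \<le> (M + 1) * (M + 1) * card S"
    using card_mono[OF _ cycles_subset[of M S]] assms(1)
    by (simp add: card_cartesian_product algebra_simps)
  also have "\<dots> \<le> (M + 1) * (M + 1) * (M + 1)" using assms(2) by (intro mult_le_mono2) simp
  finally show ?thesis by (simp add: power3_eq_cube)
qed

lemma prob_run_le_sum_cycles:
  assumes wf: "wf_snn N" and silent: "\<And>i. 0 < i \<Longrightarrow> \<not> X i"
    and "card (configs N) * g \<le> l" and "l \<le> T"
  shows "measure_pmf.prob (traj N X T) {h. \<forall>j\<in>{1..l}. h j (outp N)}
     \<le> (\<Sum>(i, i', s)\<in>cycles (card (configs N)) (configs N).
          firing_weight N (i * g) (init_state N (X 0)) s * firing_weight N ((i' - i) * g) s s)"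
proof -
  let ?M = "card (configs N)" and ?p = "traj N X T"
  let ?run = "\<lambda>l h. \<forall>j\<in>{1..l}. h j (outp N)"
  let ?E = "\<lambda>(i, i', s). {h. ?run (i' * g) h \<and> h (i * g) = s \<and> h (i' * g) = s}"
  have fin: "finite (configs N)" using wf by (simp add: wf_snn_def finite_configs)
  have cover: "{h. ?run l h} \<inter> set_pmf ?p \<subseteq> (\<Union>q\<in>cycles ?M (configs N). ?E q)"
  proof
    fix h assume h: "h \<in> {h. ?run l h} \<inter> set_pmf ?p"
    then obtain i i' where ii: "i < i'" "i' \<le> ?M" "h (i * g) = h (i' * g)"
      using pigeonhole_repeat[OF fin, of "\<lambda>i. h (i * g)"] traj_in_configs[OF wf] by blast
    then have "i' * g \<le> l" using assms(3) by (meson le_trans mult_le_mono1)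
    then have "h \<in> ?E (i, i', h (i * g))" using h ii by auto
    moreover have "(i, i', h (i * g)) \<in> cycles ?M (configs N)"
      using ii h traj_in_configs[OF wf] by (auto simp: cycles_def)
    ultimately show "h \<in> (\<Union>q\<in>cycles ?M (configs N). ?E q)" by blast
  qed
  have "measure_pmf.prob ?p {h. ?run l h} = measure_pmf.prob ?p ({h. ?run l h} \<inter> set_pmf ?p)"
    by (simp only: measure_Int_set_pmf)
  also have "\<dots> \<le> measure_pmf.prob ?p (\<Union>q\<in>cycles ?M (configs N). ?E q)"
    by (rule measure_pmf.finite_measure_mono[OF cover]) simp
  also have "\<dots> \<le> (\<Sum>q\<in>cycles ?M (configs N). measure_pmf.prob ?p (?E q))"
    by (rule measure_pmf.finite_measure_subadditive_finite[OF finite_cycles[OF fin]]) auto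
  also have "\<dots> = (\<Sum>(i, i', s)\<in>cycles ?M (configs N).
      firing_weight N (i * g) (init_state N (X 0)) s * firing_weight N ((i' - i) * g) s s)"
  proof (rule sum.cong[OF refl])
    fix q assume "q \<in> cycles ?M (configs N)"
    then obtain i i' s where q: "q = (i, i', s)" and "i < i'" and "i' \<le> ?M"
      by (auto simp: cycles_def)
    then have "i * g \<le> i' * g" and "i' * g \<le> ?M * g" by simp_all
    then have "i * g \<le> i' * g" and "i' * g \<le> T" using assms(3,4) by linarith+
    have "measure_pmf.prob ?p (?E q) = measure_pmf.prob (traj N X (i' * g)) (?E q)"
      using \<open>i * g \<le> i' * g\<close> \<open>i' * g \<le> T\<close> by (intro prob_traj_extend) (auto simp: q)
    then show "measure_pmf.prob ?p (?E q) = (case q of (i, i', s) \<Rightarrow>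
        firing_weight N (i * g) (init_state N (X 0)) s * firing_weight N ((i' - i) * g) s s)"
      using prob_run_through[OF wf silent \<open>i * g \<le> i' * g\<close>, where s=s and u=s]
      by (simp add: q diff_mult_distrib)
  qed
  finally show ?thesis .
qed

lemma ex_ge_of_sum_gt:
  fixes f :: "'a \<Rightarrow> real"
  assumes "real (card A) * \<eta> < (\<Sum>x\<in>A. f x)"
  shows "\<exists>x\<in>A. \<eta> \<le> f x"
  using sum_bounded_above[of A f \<eta>] assms by (force simp: not_le)

lemma le_double_mult_div:
  fixes m n :: nat
  assumes "0 < n" and "n \<le> m"
  shows "m \<le> 2 * (n * (m div n))"
proof -
  have "0 < m div n" using assms by (simp add: div_greater_zero_iff)
  then have "n \<le> n * (m div n)" by simp
  moreover have "m = n * (m div n) + m mod n" by simp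
  moreover have "m mod n < n" using assms(1) by simp
  ultimately show ?thesis by linarith
qed

lemma timer_run_bounds:
  assumes timer: "is_timer N t \<delta> T" and "0 < t" and "2 * t \<le> T"
  shows "1 - \<delta> \<le> measure_pmf.prob (traj N (\<lambda>i. i = 0) T) {h. \<forall>j\<in>{1..t}. h j (outp N)}"
    and "measure_pmf.prob (traj N (\<lambda>i. i = 0) T) {h. \<forall>j\<in>{1..2 * t}. h j (outp N)} \<le> \<delta>"
proof -
  let ?X = "\<lambda>i::nat. i = 0" and ?y = "outp N"
  let ?p = "traj N ?X T"
  have first: "\<forall>X \<tau>. X \<tau> \<longrightarrow> \<tau> + t \<le> T \<longrightarrow>
      1 - \<delta> \<le> measure_pmf.prob (traj N X T) {h. \<forall>i\<in>{1..t}. h (\<tau> + i) ?y}"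
    and second: "\<forall>X. 1 - \<delta> \<le> measure_pmf.prob (traj N X T)
      {h. \<forall>\<tau>'\<le>T. \<forall>l\<le>\<tau>'. X l \<and> (\<forall>i. l < i \<and> i \<le> \<tau>' \<longrightarrow> \<not> X i) \<and> 2 * t \<le> \<tau>' - l
           \<longrightarrow> \<not> h \<tau>' ?y}"
    using timer unfolding is_timer_def by blast+
  show "1 - \<delta> \<le> measure_pmf.prob ?p {h. \<forall>j\<in>{1..t}. h j ?y}"
    using spec[OF spec[OF first, of ?X], of 0] assms(3) by simp
  let ?A = "{h. \<forall>j\<in>{1..2 * t}. h j ?y}"
  let ?B = "{h. \<forall>\<tau>'\<le>T. \<forall>l\<le>\<tau>'. ?X l \<and> (\<forall>i. l < i \<and> i \<le> \<tau>' \<longrightarrow> \<not> ?X i) \<and> 2 * t \<le> \<tau>' - l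
             \<longrightarrow> \<not> h \<tau>' ?y}"
  have "1 - \<delta> \<le> measure_pmf.prob ?p ?B" by (rule spec[OF second])
  moreover have "?A \<inter> ?B = {}"
  proof (intro equals0I)
    fix h assume h: "h \<in> ?A \<inter> ?B"
    then have "h (2 * t) ?y" using \<open>0 < t\<close> by auto
    moreover have "?X 0 \<and> (\<forall>i. 0 < i \<and> i \<le> 2 * t \<longrightarrow> \<not> ?X i) \<and> 2 * t \<le> 2 * t - 0
        \<longrightarrow> \<not> h (2 * t) ?y"
      using h assms(3) by simp
    ultimately show False by simp
  qed
  then have "measure_pmf.prob ?p ?A + measure_pmf.prob ?p ?B = measure_pmf.prob ?p (?A \<union> ?B)"
    by (simp add: measure_pmf.finite_measure_Union)
  moreover have "measure_pmf.prob ?p (?A \<union> ?B) \<le> 1" by simp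
  ultimately show "measure_pmf.prob ?p ?A \<le> \<delta>" by linarith
qed

lemma timer_delta_ge:
  assumes timer: "is_timer N t \<delta> T" and "2 * t \<le> T" and "\<delta> < 1 / 2"
    and "card (configs N) \<le> t"
  shows "(1 / (2 * (real (card (configs N)) + 1) ^ 3)) ^ (4 * card (configs N) + 1) \<le> \<delta>"
proof -
  let ?M = "card (configs N)" and ?s0 = "init_state N True" and ?X = "\<lambda>i::nat. i = 0"
  define g where "g = t div ?M"
  let ?F = "\<lambda>(i, i', s). firing_weight N (i * g) ?s0 s * firing_weight N ((i' - i) * g) s s"
  define \<eta> where "\<eta> = 1 / (2 * (real ?M + 1) ^ 3)"
  have wf: "wf_snn N" using timer by (simp add: is_timer_def)
  have silent: "\<And>i. 0 < i \<Longrightarrow> \<not> ?X i" by simp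
  have fin: "finite (configs N)" using wf by (simp add: wf_snn_def finite_configs)
  have s0: "?s0 \<in> configs N" using wf by (auto simp: configs_def init_state_def wf_snn_def)
  then have "0 < ?M" using fin card_gt_0_iff by blast
  then have "0 < t" and Mg: "?M * g \<le> t" and t2: "2 * t \<le> 4 * ?M * g"
    using assms(4) le_double_mult_div[of ?M t] by (auto simp: g_def)
  have "real (card (cycles ?M (configs N))) \<le> real ((?M + 1) ^ 3)"
    using card_cycles_le[OF fin order.refl] by (simp only: of_nat_le_iff)
  also have "\<dots> = (real ?M + 1) ^ 3" by (simp add: add.commute)
  finally have "real (card (cycles ?M (configs N))) \<le> (real ?M + 1) ^ 3" .
  then have "real (card (cycles ?M (configs N))) * \<eta> \<le> (real ?M + 1) ^ 3 * \<eta>"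
    by (rule mult_right_mono) (simp add: \<eta>_def)
  also have "\<dots> < 1 - \<delta>" using assms(3) by (simp add: \<eta>_def)
  also have "\<dots> \<le> measure_pmf.prob (traj N ?X T) {h. \<forall>j\<in>{1..t}. h j (outp N)}"
    using timer_run_bounds(1)[OF timer \<open>0 < t\<close> assms(2)] by simp
  also have "\<dots> \<le> (\<Sum>q\<in>cycles ?M (configs N). ?F q)"
    using prob_run_le_sum_cycles[where X="?X" and T=T, OF wf silent Mg] assms(2) by simp
  finally obtain i i' s where "(i, i', s) \<in> cycles ?M (configs N)" and large: "\<eta> \<le> ?F (i, i', s)"
    by (auto dest: ex_ge_of_sum_gt)
  then have "i < i'" and s: "s \<in> configs N" by (auto simp: cycles_def)
  then have "1 \<le> i' - i" by linarith
  then have "g \<le> (i' - i) * g" by simp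
  then have "4 * ?M * g \<le> 4 * ?M * ((i' - i) * g)" by (rule mult_le_mono2)
  then have "2 * t \<le> i * g + 4 * ?M * ((i' - i) * g)" using t2 by linarith
  then have "\<eta> ^ (4 * ?M + 1) \<le> (\<Sum>u\<in>configs N. firing_weight N (2 * t) ?s0 u)"
    using large by (intro sum_path_weight_ge_cycle_power[OF fin s0 s]) (simp_all add: \<eta>_def)
  also have "\<dots> \<le> \<delta>"
    using timer_run_bounds(2)[OF timer \<open>0 < t\<close> assms(2)]
      prob_run[where X="?X", OF wf silent assms(2)]
    by simp
  finally show ?thesis unfolding \<eta>_def .
qed

lemma double_cube_le_pow2: "2 * (2 ^ n + 1) ^ 3 \<le> (2::nat) ^ (3 * n + 4)"
proof -
  have "(2 ^ n + 1) ^ 3 \<le> ((2::nat) ^ Suc n) ^ 3"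
    using one_le_power[of "2::nat" n] by (intro power_mono) simp_all
  also have "\<dots> = 2 ^ (3 * n + 3)" by (simp only: power_mult[symmetric]) (simp add: algebra_simps)
  finally show ?thesis by (simp add: power_add)
qed

lemma linear_mult_pow2_le_pow2: "(4 * 2 ^ n + 1) * (3 * n + 4) \<le> (2::nat) ^ (2 * n + 6)"
proof -
  have "4 * 2 ^ n + 1 \<le> 5 * (2::nat) ^ n" and "3 * n + 4 \<le> 7 * (2::nat) ^ n"
    using less_exp[of n] one_le_power[of "2::nat" n] by linarith+
  then have "(4 * 2 ^ n + 1) * (3 * n + 4) \<le> (5 * (2::nat) ^ n) * (7 * 2 ^ n)"
    by (rule mult_le_mono)
  also have "\<dots> \<le> 64 * (2 ^ n * 2 ^ n)" by simp
  also have "\<dots> = (2::nat) ^ (n + n) * 2 ^ 6" by (simp add: power_add)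
  also have "\<dots> = (2::nat) ^ (2 * n + 6)" by (simp only: mult_2 power_add)
  finally show ?thesis .
qed

lemma ln_ln_inverse_le:
  fixes \<delta> :: real
  assumes "2 \<le> n" and "0 < \<delta>" and "\<delta> < 1"
    and delta: "(1 / (2 * (2 ^ n + 1) ^ 3)) ^ (4 * 2 ^ n + 1) \<le> \<delta>"
  shows "ln (ln (1 / \<delta>)) \<le> 5 * real n"
proof -
  define R :: real where "R = 2 * (2 ^ n + 1) ^ 3"
  have "0 < R" unfolding R_def by (intro mult_pos_pos zero_less_power add_pos_pos) simp_all
  have "R = real (2 * (2 ^ n + 1) ^ 3)" unfolding R_def by (simp add: add.commute)
  also have "\<dots> \<le> real ((2::nat) ^ (3 * n + 4))"
    using double_cube_le_pow2[of n] by (simp only: of_nat_le_iff)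
  finally have "ln R \<le> real (3 * n + 4) * ln 2"
    using \<open>0 < R\<close> by (simp add: ln_realpow flip: ln_le_cancel_iff)
  also have "\<dots> \<le> real (3 * n + 4)" using ln_2_less_1 by simp
  finally have lnR: "ln R \<le> real (3 * n + 4)" .
  have "(1 / R) ^ (4 * 2 ^ n + 1) \<le> \<delta>" using delta by (simp add: R_def)
  then have "1 / \<delta> \<le> R ^ (4 * 2 ^ n + 1)"
    using \<open>0 < \<delta>\<close> \<open>0 < R\<close> by (simp add: field_simps)
  then have "ln (1 / \<delta>) \<le> ln (R ^ (4 * 2 ^ n + 1))"
    using \<open>0 < \<delta>\<close> \<open>0 < R\<close> by (subst ln_le_cancel_iff) auto
  also have "\<dots> = real (4 * 2 ^ n + 1) * ln R" by (rule ln_realpow)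
  also have "\<dots> \<le> real (4 * 2 ^ n + 1) * real (3 * n + 4)"
    using lnR by (intro mult_left_mono) simp_all
  also have "\<dots> = real ((4 * 2 ^ n + 1) * (3 * n + 4))" by (simp only: of_nat_mult)
  also have "\<dots> \<le> real ((2::nat) ^ (2 * n + 6))"
    using linear_mult_pow2_le_pow2[of n] by (simp only: of_nat_le_iff)
  finally have "ln (ln (1 / \<delta>)) \<le> ln (2 ^ (2 * n + 6))"
    using assms(2,3) by (subst ln_le_cancel_iff) auto
  also have "\<dots> = real (2 * n + 6) * ln 2" by (rule ln_realpow)
  also have "\<dots> \<le> real (2 * n + 6)" using ln_2_less_1 by simp
  finally show ?thesis using assms(1) by simp
qed

lemma timer_neuron_bound:
  assumes timer: "is_timer N t \<delta> T" and "0 < t" and "0 < \<delta>" and "\<delta> < 1" and "2 * t \<le> T"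
  shows "min (ln (ln (1 / \<delta>))) (ln (real t)) \<le> 5 * real (card (neurons N))"
proof -
  let ?n = "card (neurons N)"
  have "finite (neurons N)" and "{inp N, outp N} \<subseteq> neurons N" and "inp N \<noteq> outp N"
    using timer by (simp_all add: is_timer_def wf_snn_def)
  then have "2 \<le> ?n" using card_mono[of "neurons N" "{inp N, outp N}"] by simp
  have M: "card (configs N) = 2 ^ ?n" using \<open>finite (neurons N)\<close> by (rule card_configs)
  consider "1 / 2 \<le> \<delta>" | "t < 2 ^ ?n" | "\<delta> < 1 / 2" and "2 ^ ?n \<le> t" by linarith
  then show ?thesis
  proof cases
    case 1
    then have "1 / \<delta> \<le> 2" using \<open>0 < \<delta>\<close> by (simp add: field_simps)
    then have "ln (1 / \<delta>) \<le> ln 2" using \<open>0 < \<delta>\<close> by (subst ln_le_cancel_iff) auto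
    then have "ln (1 / \<delta>) < 1" using ln_2_less_1 by linarith
    then have "ln (ln (1 / \<delta>)) < 0" using \<open>0 < \<delta>\<close> \<open>\<delta> < 1\<close> by simp
    then show ?thesis by (simp add: min_le_iff_disj)
  next
    case 2
    then have "real t < real (2 ^ ?n)" by (simp only: of_nat_less_iff)
    then have "ln (real t) < ln (2 ^ ?n)" using \<open>0 < t\<close> by (subst ln_less_cancel_iff) auto
    also have "\<dots> = real ?n * ln 2" by (rule ln_realpow)
    also have "\<dots> \<le> real ?n" using ln_2_less_1 by (simp add: mult_left_le)
    finally show ?thesis by (simp add: min_le_iff_disj)
  next
    case 3
    then have "card (configs N) \<le> t" using M by simp
    with 3(1) have "(1 / (2 * (2 ^ ?n + 1) ^ 3)) ^ (4 * 2 ^ ?n + 1) \<le> \<delta>"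
      using timer_delta_ge[OF timer assms(5)] M by simp
    then have "ln (ln (1 / \<delta>)) \<le> 5 * real ?n"
      by (rule ln_ln_inverse_le[OF \<open>2 \<le> ?n\<close> \<open>0 < \<delta>\<close> \<open>\<delta> < 1\<close>])
    then show ?thesis by (simp add: min_le_iff_disj)
  qed
qed

theorem theorem3:
  fixes W :: "nat \<Rightarrow> nat"
  assumes "\<exists>a d. \<forall>t. W t \<le> a * t ^ d + a"
    and "\<forall>t. 2 * t \<le> W t"
  shows "\<exists>c>0. \<forall>(t::nat) (\<delta>::real) N.
           0 < t \<longrightarrow> 0 < \<delta> \<longrightarrow> \<delta> < 1 \<longrightarrow> is_timer N t \<delta> (W t) \<longrightarrow>
           real (card (neurons N)) \<ge> c * min (ln (ln (1 / \<delta>))) (ln (real t))"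
proof (intro exI[of _ "1 / 5"] conjI allI impI)
  fix t :: nat and \<delta> :: real and N
  assume "0 < t" "0 < \<delta>" "\<delta> < 1" "is_timer N t \<delta> (W t)"
  then have "min (ln (ln (1 / \<delta>))) (ln (real t)) \<le> 5 * real (card (neurons N))"
    using timer_neuron_bound assms(2) by blast
  then show "1 / 5 * min (ln (ln (1 / \<delta>))) (ln (real t)) \<le> real (card (neurons N))" by simp
qed simp

end
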